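(* Let $A=\mathrm{diag}(G_1,\dots,G_m,[1])\in\mathbb{R}^{n\times n}$, $m\geq1$ (trailing block $[1]$ possibly absent), with $G_j=\begin{bmatrix}c_j&s_j\\-s_j&c_j\end{bmatrix}$, $c_j^2+s_j^2=1$, $s_j\neq 0$, $0<c_1<\cdots<c_m<1$. Let $v_0$ be a unit norm vector with $d(A,v_0)\geq 2$ and $v_0^{(1)}\neq 0$, and let $v_*$ be the limit of the sequence $\{v_k\}$ of the iteration ACI($1$) below. Then $$\min_{\alpha\in\mathbb{R}}\|A-\alpha I\|=\|A-c_1I\|=\|Av_*-c_1v_*\|=(1-c_1^2)^{1/2},$$ i.e. $v_*$ attains the value of the ideal Arnoldi problem $\min_{\alpha\in\mathbb{R}}\|A-\alpha I\|$.
   Context: Block partitioning: $v=[v^{(1)};\dots;v^{(m)};v^{(m+1)}]$ with $v^{(j)}\in\mathbb{R}^2$ for $j\leq m$ (conforming with $G_j$) and $v^{(m+1)}\in\mathbb{R}$ present only if the block $[1]$ is. ACI($1$): for $k=0,1,2,\dots$: $\widetilde w_k=(A-\alpha_kI)v_k$ with $\alpha_k=v_k^TAv_k$; $w_k=\widetilde w_k/\|\widetilde w_k\|$; $\widetilde v_{k+1}=(A^T-\beta_kI)w_k$ with $\beta_k=w_k^TAw_k$; $v_{k+1}=\widetilde v_{k+1}/\|\widetilde v_{k+1}\|$. $d(A,v)$ is the grade of $v$ w.r.t. $A$; $\|\cdot\|$ is the Euclidean vector norm and the induced spectral matrix norm. *)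

theory Defs
  imports Complex_Main
begin

text \<open>Vectors of length n are functions nat => real (only indices < n matter);
  n x n matrices are functions nat => nat => real (only indices < n matter).
  Indices are 0-based.\<close>

definition matvec :: "nat \<Rightarrow> (nat \<Rightarrow> nat \<Rightarrow> real) \<Rightarrow> (nat \<Rightarrow> real) \<Rightarrow> (nat \<Rightarrow> real)" where
  "matvec n M x = (\<lambda>i. if i < n then (\<Sum>j<n. M i j * x j) else 0)"

definition vnorm :: "nat \<Rightarrow> (nat \<Rightarrow> real) \<Rightarrow> real" where
  "vnorm n x = sqrt (\<Sum>i<n. (x i)\<^sup>2)"

definition dotp :: "nat \<Rightarrow> (nat \<Rightarrow> real) \<Rightarrow> (nat \<Rightarrow> real) \<Rightarrow> real" where
  "dotp n x y = (\<Sum>i<n. x i * y i)"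

definition transp :: "(nat \<Rightarrow> nat \<Rightarrow> real) \<Rightarrow> (nat \<Rightarrow> nat \<Rightarrow> real)" where
  "transp M = (\<lambda>i j. M j i)"

definition idm :: "nat \<Rightarrow> nat \<Rightarrow> real" where
  "idm = (\<lambda>i j. if i = j then 1 else 0)"

definition opnorm :: "nat \<Rightarrow> (nat \<Rightarrow> nat \<Rightarrow> real) \<Rightarrow> real" where
  "opnorm n M = Sup {vnorm n (matvec n M x) | x. vnorm n x = 1}"

definition grade :: "nat \<Rightarrow> (nat \<Rightarrow> nat \<Rightarrow> real) \<Rightarrow> (nat \<Rightarrow> real) \<Rightarrow> nat" where
  "grade n M v = (LEAST d. \<exists>c :: nat \<Rightarrow> real. \<forall>i<n.
      ((matvec n M ^^ d) v) i = (\<Sum>j<d. c j * ((matvec n M ^^ j) v) i))"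

definition aci_step :: "nat \<Rightarrow> (nat \<Rightarrow> nat \<Rightarrow> real) \<Rightarrow> (nat \<Rightarrow> real) \<Rightarrow> (nat \<Rightarrow> real)" where
  "aci_step n A v =
    (let \<alpha> = dotp n v (matvec n A v);
         wt = (\<lambda>i. matvec n A v i - \<alpha> * v i);
         w = (\<lambda>i. wt i / vnorm n wt);
         \<beta> = dotp n w (matvec n A w);
         vt = (\<lambda>i. matvec n (transp A) w i - \<beta> * w i)
     in (\<lambda>i. vt i / vnorm n vt))"

definition aci :: "nat \<Rightarrow> (nat \<Rightarrow> nat \<Rightarrow> real) \<Rightarrow> (nat \<Rightarrow> real) \<Rightarrow> nat \<Rightarrow> (nat \<Rightarrow> real)" where
  "aci n A v0 k = (aci_step n A ^^ k) v0"

text \<open>A = diag(G_1,...,G_m,[1]) with G_j = [[c_j, s_j], [-s_j, c_j]];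
  block j (0-based, j < m) occupies indices 2j, 2j+1; the trailing [1]
  (present iff trail) sits at index 2m.\<close>
definition blockA :: "nat \<Rightarrow> bool \<Rightarrow> (nat \<Rightarrow> real) \<Rightarrow> (nat \<Rightarrow> real) \<Rightarrow> nat \<Rightarrow> nat \<Rightarrow> real" where
  "blockA m trail c s = (\<lambda>i k.
     if i < 2*m \<and> k < 2*m \<and> i div 2 = k div 2 then
       (if even i \<and> even k then c (i div 2)
        else if even i \<and> odd k then s (i div 2)
        else if odd i \<and> even k then - s (i div 2)
        else c (i div 2))
     else if trail \<and> i = 2*m \<and> k = 2*m then 1 else 0)"

definition dimA :: "nat \<Rightarrow> bool \<Rightarrow> nat" where
  "dimA m trail = 2*m + (if trail then 1 else 0)"

end

theory Submission imports Defs begin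

text \<open>
  Indices follow the paper (c_1 is c 0 below). On the 2-dimensional block j, both A - \<alpha>I and
  A^T - \<alpha>I act as a scaled rotation with squared scale (c_j - \<alpha>)^2 + s_j^2 = 1 - 2\<alpha>c_j + \<alpha>^2,
  and on the trailing entry as multiplication by 1 - \<alpha>. The Rayleigh quotients \<alpha>_k, \<beta>_k of
  unit vectors are convex combinations of the c_j and 1, hence lie in [c_1, 1]; for such shifts
  every block other than the first is scaled by at most \<theta> < 1 times the scaling of the first
  block. So the ratio of the squared mass outside the first block to the squared mass inside it
  contracts by \<theta>^2 per ACI step, and the limit v_* is a unit vector supported on the first
  block, where |(A - c_1I)v_*|^2 = 1 - c_1^2. The same block computation gives
  |(A - c_1I)x|^2 \<le> 1 - c_1^2 for unit x, while the first unit vector e_1 gives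
  |(A - \<alpha>I)e_1|^2 = (\<alpha> - c_1)^2 + 1 - c_1^2.
\<close>

lemma sum_lessThan_double: "(\<Sum>i<2*(m::nat). g i) = (\<Sum>j<m. g (2*j) + g (2*j+1))"
  by (induction m) (auto simp: sum.lessThan_Suc add.assoc)

lemma sum_lessThan_dimA:
  "(\<Sum>i<dimA m trail. g i) = (\<Sum>j<m. g (2*j) + g (2*j+1)) + (if trail then g (2*m) else 0)"
  by (auto simp: dimA_def sum_lessThan_double simp flip: Suc_eq_plus1)

lemma div2_eq_even: "even (i::nat) \<Longrightarrow> (j div 2 = i div 2) = (j = i \<or> j = Suc i)"
  by presburger

lemma div2_eq_odd: "odd (i::nat) \<Longrightarrow> (j div 2 = i div 2) = (j = i \<or> j = i - 1)"
  by presburger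

lemma matvec_diff_scaled_idm:
  assumes "i < n"
  shows "matvec n (\<lambda>i j. M i j - \<alpha> * idm i j) v i = matvec n M v i - \<alpha> * v i"
proof -
  have "(\<Sum>j<n. (M i j - \<alpha> * idm i j) * v j) = (\<Sum>j<n. M i j * v j - (if j = i then \<alpha> * v j else 0))"
    by (rule sum.cong) (auto simp: idm_def algebra_simps)
  also have "\<dots> = (\<Sum>j<n. M i j * v j) - \<alpha> * v i"
    using assms by (simp add: sum_subtractf)
  finally show ?thesis using assms by (simp add: matvec_def)
qed

lemma opnorm_eqI:
  assumes "vnorm n x0 = 1" "vnorm n (matvec n M x0) = b"
    and "\<And>x. vnorm n x = 1 \<Longrightarrow> vnorm n (matvec n M x) \<le> b"
  shows "opnorm n M = b"
  unfolding opnorm_def using assms by (intro cSup_eq_maximum) auto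

lemma vnorm_matvec_le_opnorm:
  assumes "vnorm n x0 = 1" "\<And>x. vnorm n x = 1 \<Longrightarrow> vnorm n (matvec n M x) \<le> B"
  shows "vnorm n (matvec n M x0) \<le> opnorm n M"
  unfolding opnorm_def using assms by (intro cSup_upper bdd_aboveI) auto

text \<open>The squared distance from \<alpha> to the eigenvalues x \<plusminus> i sqrt(1 - x^2) of a rotation with
  cosine x.\<close>
definition shift_factor :: "real \<Rightarrow> real \<Rightarrow> real" where
  "shift_factor \<alpha> x = 1 - 2*\<alpha>*x + \<alpha>\<^sup>2"

lemma shift_factor_eq: "shift_factor \<alpha> x = (\<alpha> - x)\<^sup>2 + (1 - x\<^sup>2)"
  by (simp add: shift_factor_def power2_diff)

lemma shift_factor_one: "shift_factor \<alpha> 1 = (1 - \<alpha>)\<^sup>2"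
  by (simp add: shift_factor_def power2_diff)

lemma shift_factor_pos: "\<bar>x\<bar> < 1 \<Longrightarrow> 0 < shift_factor \<alpha> x"
  by (simp add: shift_factor_eq abs_square_less_1 add_nonneg_pos)

lemma shift_factor_antimono: "0 \<le> \<alpha> \<Longrightarrow> x \<le> y \<Longrightarrow> shift_factor \<alpha> y \<le> shift_factor \<alpha> x"
  by (simp add: shift_factor_def mult_left_mono)

lemma shift_factor_le: "\<bar>x\<bar> \<le> 1 \<Longrightarrow> shift_factor \<alpha> x \<le> (1 + \<bar>\<alpha>\<bar>)\<^sup>2"
proof -
  assume "\<bar>x\<bar> \<le> 1"
  then have "\<bar>\<alpha> * x\<bar> \<le> \<bar>\<alpha>\<bar>" by (simp add: abs_mult mult_left_le)
  then show ?thesis by (simp add: shift_factor_def power2_eq_square algebra_simps)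
qed

locale rotation_blocks =
  fixes m :: nat and trail :: bool and c s :: "nat \<Rightarrow> real"
  assumes m_pos: "m \<ge> 1"
    and cos_sin: "\<forall>j<m. (c j)\<^sup>2 + (s j)\<^sup>2 = 1"
    and c0_pos: "0 < c 0"
    and c_strict_mono: "\<forall>i j. i < j \<and> j < m \<longrightarrow> c i < c j"
    and c_last_lt_1: "c (m - 1) < 1"
begin

abbreviation "NN \<equiv> dimA m trail"
abbreviation "AA \<equiv> blockA m trail c s"

lemma c_lt_1: "j < m \<Longrightarrow> c j < 1"
  using c_strict_mono[rule_format, of j "m-1"] c_last_lt_1 by (cases "j = m - 1") force+

lemma c0_le: "j < m \<Longrightarrow> c 0 \<le> c j"
  using c_strict_mono[rule_format, of 0 j] by (cases "j = 0") auto

lemma c0_lt_1: "c 0 < 1"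
  using c_lt_1 m_pos by auto

lemma abs_c_le_1: "j < m \<Longrightarrow> \<bar>c j\<bar> \<le> 1"
  using c_lt_1 c0_le c0_pos by force

definition signed_blockA :: "real \<Rightarrow> nat \<Rightarrow> nat \<Rightarrow> real" where
  "signed_blockA \<sigma> i j =
    (if i < 2*m then
       (if j = i then c (i div 2)
        else if even i \<and> j = Suc i then \<sigma> * s (i div 2)
        else if odd i \<and> j = i - 1 then - (\<sigma> * s (i div 2)) else 0)
     else if trail \<and> i = 2*m \<and> j = 2*m then 1 else 0)"

lemma blockA_eq_signed: "AA = signed_blockA 1"
proof (intro ext)
  fix i j
  show "AA i j = signed_blockA 1 i j"
  proof (cases "i < 2*m")
    case True
    show ?thesis
    proof (cases "even i")
      case e: True
      then have "Suc i < 2*m" using True by (auto elim!: evenE)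
      then show ?thesis
        using True e div2_eq_even[OF e, of j] unfolding blockA_def signed_blockA_def by auto
    next
      case o: False
      then show ?thesis
        using True div2_eq_odd[OF o, of j] unfolding blockA_def signed_blockA_def by auto
    qed
  qed (auto simp: blockA_def signed_blockA_def)
qed

lemma transp_blockA_eq_signed: "transp AA = signed_blockA (-1)"
proof (intro ext)
  fix i j
  show "transp AA i j = signed_blockA (-1) i j"
  proof (cases "i < 2*m")
    case True
    show ?thesis
    proof (cases "even i")
      case e: True
      then have "Suc i < 2*m" using True by (auto elim!: evenE)
      then show ?thesis
        using True e div2_eq_even[OF e, of j] div2_eq_odd[of "Suc i" i]
        unfolding blockA_def transp_def signed_blockA_def by auto
    next
      case o: False
      then have "i - 1 < 2*m" "even (i - 1)" "Suc (i - 1) = i" using True by (auto elim!: oddE)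
      then show ?thesis
        using True o div2_eq_odd[OF o, of j] div2_eq_even[of "i - 1" i]
        unfolding blockA_def transp_def signed_blockA_def by auto
    qed
  qed (auto simp: blockA_def transp_def signed_blockA_def)
qed

definition shifted :: "real \<Rightarrow> real \<Rightarrow> (nat \<Rightarrow> real) \<Rightarrow> nat \<Rightarrow> real" where
  "shifted \<sigma> \<alpha> v i =
    (if i < 2*m then
       (if even i then (c (i div 2) - \<alpha>) * v i + \<sigma> * s (i div 2) * v (Suc i)
        else (c (i div 2) - \<alpha>) * v i - \<sigma> * s (i div 2) * v (i - 1))
     else if trail \<and> i = 2*m then (1 - \<alpha>) * v i else 0)"

lemma matvec_signed_blockA:
  assumes i: "i < NN"
  shows "matvec NN (signed_blockA \<sigma>) v i - \<alpha> * v i = shifted \<sigma> \<alpha> v i"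
proof (cases "i < 2*m")
  case True
  have "(\<Sum>j<NN. signed_blockA \<sigma> i j * v j) = (\<Sum>j<NN. (if j = i then c (i div 2) * v j else 0)
     + (if even i \<and> j = Suc i then \<sigma> * s (i div 2) * v j else 0)
     + (if odd i \<and> j = i - 1 then - (\<sigma> * s (i div 2)) * v j else 0))"
    using odd_pos[of i] by (intro sum.cong) (auto simp: signed_blockA_def True)
  also have "\<dots> = c (i div 2) * v i + (if even i then \<sigma> * s (i div 2) * v (Suc i) else 0)
      + (if odd i then - (\<sigma> * s (i div 2)) * v (i - 1) else 0)"
  proof -
    have "Suc i < NN" if "even i" using that True by (auto simp: dimA_def elim!: evenE)
    then show ?thesis using i by (simp add: sum.distrib sum.If_cases)
  qed
  finally show ?thesis using i True by (auto simp: matvec_def shifted_def algebra_simps)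
next
  case False
  then have t: "trail" "i = 2*m" using i by (auto simp: dimA_def split: if_splits)
  have "(\<Sum>j<NN. signed_blockA \<sigma> i j * v j) = (\<Sum>j<NN. (if j = 2*m then v j else 0))"
    unfolding signed_blockA_def using t by (intro sum.cong) auto
  also have "\<dots> = v i" using i t by simp
  finally show ?thesis unfolding matvec_def shifted_def using i t by (simp add: left_diff_distrib)
qed

lemma matvec_blockA: "i < NN \<Longrightarrow> matvec NN AA v i - \<alpha> * v i = shifted 1 \<alpha> v i"
  by (simp add: blockA_eq_signed matvec_signed_blockA)

lemma matvec_transp_blockA: "i < NN \<Longrightarrow> matvec NN (transp AA) v i - \<alpha> * v i = shifted (-1) \<alpha> v i"
  by (simp add: transp_blockA_eq_signed matvec_signed_blockA)

definition block_mass :: "(nat \<Rightarrow> real) \<Rightarrow> nat \<Rightarrow> real" where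
  "block_mass v j = (v (2*j))\<^sup>2 + (v (2*j+1))\<^sup>2"

definition trail_mass :: "(nat \<Rightarrow> real) \<Rightarrow> real" where
  "trail_mass v = (if trail then (v (2*m))\<^sup>2 else 0)"

definition sqnorm :: "(nat \<Rightarrow> real) \<Rightarrow> real" where
  "sqnorm v = (\<Sum>i<NN. (v i)\<^sup>2)"

definition lead_mass :: "(nat \<Rightarrow> real) \<Rightarrow> real" where
  "lead_mass v = block_mass v 0"

definition tail_mass :: "(nat \<Rightarrow> real) \<Rightarrow> real" where
  "tail_mass v = (\<Sum>j\<in>{1..<m}. block_mass v j) + trail_mass v"

lemma block_mass_nonneg: "block_mass v j \<ge> 0"
  by (simp add: block_mass_def)

lemma trail_mass_nonneg: "trail_mass v \<ge> 0"
  by (simp add: trail_mass_def)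

lemma tail_mass_nonneg: "tail_mass v \<ge> 0"
  by (simp add: tail_mass_def sum_nonneg block_mass_nonneg trail_mass_nonneg)

lemma sqnorm_eq_blocks: "sqnorm v = (\<Sum>j<m. block_mass v j) + trail_mass v"
  unfolding sqnorm_def sum_lessThan_dimA block_mass_def trail_mass_def by simp

lemma sum_lessThan_split_first: "(\<Sum>j<m. f j) = f 0 + (\<Sum>j\<in>{1..<m}. f j)"
proof -
  have "{..<m} = insert 0 {1..<m}" using m_pos by auto
  then show ?thesis by simp
qed

lemma sqnorm_eq_lead_tail: "sqnorm v = lead_mass v + tail_mass v"
  by (simp add: sqnorm_eq_blocks sum_lessThan_split_first lead_mass_def tail_mass_def add.assoc)

lemma vnorm_eq_sqrt_sqnorm: "vnorm NN v = sqrt (sqnorm v)"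
  by (simp add: vnorm_def sqnorm_def)

lemma vnorm_power2: "(vnorm NN v)\<^sup>2 = sqnorm v"
  by (simp add: vnorm_def sqnorm_def sum_nonneg)

lemma masses_cong:
  assumes "\<forall>i<NN. u i = u' i"
  shows "lead_mass u = lead_mass u'" "tail_mass u = tail_mass u'" "sqnorm u = sqnorm u'"
proof -
  have b: "block_mass u j = block_mass u' j" if "j < m" for j
    using assms that by (simp add: block_mass_def dimA_def)
  have t: "trail_mass u = trail_mass u'"
    using assms by (simp add: trail_mass_def dimA_def)
  show "lead_mass u = lead_mass u'" using b m_pos by (simp add: lead_mass_def)
  show "tail_mass u = tail_mass u'" using b t by (simp add: tail_mass_def)
  show "sqnorm u = sqnorm u'" using assms by (simp add: sqnorm_def)
qed

lemma block_mass_shifted: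
  assumes "j < m" "\<sigma>\<^sup>2 = 1"
  shows "block_mass (shifted \<sigma> \<alpha> v) j = shift_factor \<alpha> (c j) * block_mass v j"
proof -
  have d: "(2*j) div 2 = j" "(2*j+1) div 2 = j" "2*j < 2*m" "2*j+1 < 2*m"
    using assms by auto
  have "(c j - \<alpha>)\<^sup>2 + \<sigma>\<^sup>2 * (s j)\<^sup>2 = shift_factor \<alpha> (c j)"
    using cos_sin assms by (simp add: shift_factor_def power2_diff)
  moreover have "((c j - \<alpha>) * a + \<sigma> * s j * b)\<^sup>2 + ((c j - \<alpha>) * b - \<sigma> * s j * a)\<^sup>2
     = ((c j - \<alpha>)\<^sup>2 + \<sigma>\<^sup>2 * (s j)\<^sup>2) * (a\<^sup>2 + b\<^sup>2)" for a b
    by (simp add: power2_eq_square algebra_simps)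
  ultimately show ?thesis
    unfolding block_mass_def shifted_def using d by simp
qed

lemma trail_mass_shifted: "trail_mass (shifted \<sigma> \<alpha> v) = shift_factor \<alpha> 1 * trail_mass v"
  unfolding trail_mass_def shifted_def shift_factor_one by (simp add: power_mult_distrib)

lemma sqnorm_shifted:
  "\<sigma>\<^sup>2 = 1 \<Longrightarrow> sqnorm (shifted \<sigma> \<alpha> v)
     = (\<Sum>j<m. shift_factor \<alpha> (c j) * block_mass v j) + shift_factor \<alpha> 1 * trail_mass v"
  by (simp add: sqnorm_eq_blocks block_mass_shifted trail_mass_shifted)

lemma lead_mass_shifted:
  "\<sigma>\<^sup>2 = 1 \<Longrightarrow> lead_mass (shifted \<sigma> \<alpha> v) = shift_factor \<alpha> (c 0) * lead_mass v"
  using block_mass_shifted m_pos by (simp add: lead_mass_def)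

lemma tail_mass_shifted:
  "\<sigma>\<^sup>2 = 1 \<Longrightarrow> tail_mass (shifted \<sigma> \<alpha> v)
     = (\<Sum>j\<in>{1..<m}. shift_factor \<alpha> (c j) * block_mass v j) + shift_factor \<alpha> 1 * trail_mass v"
  by (simp add: tail_mass_def block_mass_shifted trail_mass_shifted)

lemma sqnorm_shifted_le:
  assumes "\<And>j. j < m \<Longrightarrow> shift_factor \<alpha> (c j) \<le> K" "shift_factor \<alpha> 1 \<le> K"
  shows "sqnorm (shifted 1 \<alpha> x) \<le> K * sqnorm x"
proof -
  have "sqnorm (shifted 1 \<alpha> x) \<le> (\<Sum>j<m. K * block_mass x j) + K * trail_mass x"
    unfolding sqnorm_shifted[of 1, simplified]
    by (intro add_mono sum_mono mult_right_mono assms block_mass_nonneg trail_mass_nonneg) auto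
  also have "\<dots> = K * sqnorm x"
    by (simp add: sqnorm_eq_blocks sum_distrib_left distrib_left)
  finally show ?thesis .
qed

lemma rayleigh_eq: "dotp NN v (matvec NN AA v) = (\<Sum>j<m. c j * block_mass v j) + trail_mass v"
proof -
  have "dotp NN v (matvec NN AA v) = (\<Sum>i<NN. v i * shifted 1 0 v i)"
    unfolding dotp_def by (rule sum.cong) (auto simp: matvec_blockA[of _ v 0, simplified])
  also have "\<dots> = (\<Sum>j<m. c j * block_mass v j) + trail_mass v"
  proof -
    have "v (2*j) * shifted 1 0 v (2*j) + v (2*j+1) * shifted 1 0 v (2*j+1) = c j * block_mass v j"
      if "j < m" for j
    proof -
      have "(2*j) div 2 = j" "(2*j+1) div 2 = j" "2*j < 2*m" "2*j+1 < 2*m" using that by auto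
      then show ?thesis
        unfolding shifted_def block_mass_def by (simp add: power2_eq_square algebra_simps)
    qed
    then show ?thesis
      unfolding sum_lessThan_dimA trail_mass_def shifted_def by (simp add: power2_eq_square)
  qed
  finally show ?thesis .
qed

lemma rayleigh_bounds:
  assumes "sqnorm v = 1"
  shows "c 0 \<le> dotp NN v (matvec NN AA v)" "dotp NN v (matvec NN AA v) \<le> 1"
proof -
  have s1: "(\<Sum>j<m. block_mass v j) + trail_mass v = 1"
    using assms sqnorm_eq_blocks by simp
  have "(\<Sum>j<m. c 0 * block_mass v j) \<le> (\<Sum>j<m. c j * block_mass v j)"
    by (rule sum_mono) (simp add: c0_le block_mass_nonneg mult_right_mono)
  moreover have "c 0 * trail_mass v \<le> trail_mass v"
    using c0_lt_1 c0_pos trail_mass_nonneg[of v] by (intro mult_left_le_one_le) auto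
  ultimately have "c 0 * ((\<Sum>j<m. block_mass v j) + trail_mass v) \<le> (\<Sum>j<m. c j * block_mass v j) + trail_mass v"
    by (simp add: sum_distrib_left distrib_left)
  then show "c 0 \<le> dotp NN v (matvec NN AA v)" using s1 rayleigh_eq by simp
  have "(\<Sum>j<m. c j * block_mass v j) \<le> (\<Sum>j<m. block_mass v j)"
  proof (rule sum_mono)
    fix j assume "j \<in> {..<m}"
    then show "c j * block_mass v j \<le> block_mass v j"
      using c_lt_1[of j] c0_le[of j] c0_pos block_mass_nonneg[of v j]
      by (intro mult_left_le_one_le) auto
  qed
  then show "dotp NN v (matvec NN AA v) \<le> 1" using s1 rayleigh_eq by simp
qed

definition \<gamma> :: real where "\<gamma> = (if 2 \<le> m then c 1 else 1)"
definition \<theta> :: real where "\<theta> = 1 - c 0 * (\<gamma> - c 0)"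

lemma gamma_bounds: "c 0 < \<gamma>" "\<gamma> \<le> 1" "\<And>j. 1 \<le> j \<Longrightarrow> j < m \<Longrightarrow> \<gamma> \<le> c j"
proof -
  show "c 0 < \<gamma>" using c_strict_mono c0_lt_1 by (auto simp: \<gamma>_def)
  show "\<gamma> \<le> 1" using c_lt_1[of 1] by (auto simp: \<gamma>_def)
  fix j assume "1 \<le> j" "j < m"
  then show "\<gamma> \<le> c j" using c_strict_mono[rule_format, of 1 j] by (cases "j = 1") (auto simp: \<gamma>_def)
qed

lemma theta_bounds: "0 \<le> \<theta>" "\<theta> < 1"
proof -
  have a: "0 < \<gamma> - c 0" "\<gamma> - c 0 \<le> 1" using gamma_bounds c0_pos by auto
  have "c 0 * (\<gamma> - c 0) \<le> 1 * 1" using a c0_pos c0_lt_1 by (intro mult_mono) auto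
  then show "0 \<le> \<theta>" by (simp add: \<theta>_def)
  have "0 < c 0 * (\<gamma> - c 0)" using a c0_pos by simp
  then show "\<theta> < 1" by (simp add: \<theta>_def)
qed

lemma shift_factor_le_theta:
  assumes "c 0 \<le> \<alpha>" "\<alpha> \<le> 1" "\<gamma> \<le> x"
  shows "shift_factor \<alpha> x \<le> \<theta> * shift_factor \<alpha> (c 0)"
proof -
  define d where "d = c 0 * (\<gamma> - c 0)"
  have "d \<le> \<alpha> * (x - c 0)"
    unfolding d_def using assms c0_pos gamma_bounds by (intro mult_mono) auto
  then have h1: "shift_factor \<alpha> x \<le> shift_factor \<alpha> (c 0) - 2 * d"
    by (simp add: shift_factor_def algebra_simps)
  have "\<alpha>\<^sup>2 \<le> 1" using assms c0_pos by (intro power_le_one) auto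
  moreover have "0 \<le> \<alpha> * c 0" using assms c0_pos by simp
  ultimately have "shift_factor \<alpha> (c 0) \<le> 2" by (simp add: shift_factor_def)
  moreover have "0 \<le> d" using gamma_bounds c0_pos by (simp add: d_def)
  ultimately have "d * shift_factor \<alpha> (c 0) \<le> d * 2" by (simp add: mult_left_mono)
  with h1 show ?thesis by (simp add: \<theta>_def d_def algebra_simps)
qed

lemma tail_mass_shifted_le:
  assumes "\<sigma>\<^sup>2 = 1" "c 0 \<le> \<alpha>" "\<alpha> \<le> 1"
  shows "tail_mass (shifted \<sigma> \<alpha> v) \<le> \<theta> * shift_factor \<alpha> (c 0) * tail_mass v"
proof -
  define F where "F = \<theta> * shift_factor \<alpha> (c 0)"
  have "tail_mass (shifted \<sigma> \<alpha> v) \<le> (\<Sum>j\<in>{1..<m}. F * block_mass v j) + F * trail_mass v"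
    unfolding tail_mass_shifted[OF assms(1)] F_def using assms gamma_bounds
    by (intro add_mono sum_mono mult_right_mono shift_factor_le_theta block_mass_nonneg
        trail_mass_nonneg) auto
  also have "\<dots> = F * tail_mass v"
    by (simp add: tail_mass_def sum_distrib_left algebra_simps)
  finally show ?thesis by (simp add: F_def)
qed

lemma normalized_shifted_contracts:
  assumes "sqnorm v = 1" "lead_mass v > 0" "\<sigma>\<^sup>2 = 1" "c 0 \<le> \<alpha>" "\<alpha> \<le> 1"
    and u: "\<forall>i<NN. u i = shifted \<sigma> \<alpha> v i"
    and w: "w = (\<lambda>i. u i / vnorm NN u)"
  shows "sqnorm w = 1" "lead_mass w > 0" "tail_mass w / lead_mass w \<le> \<theta> * (tail_mass v / lead_mass v)"
proof -
  define f where "f = shift_factor \<alpha> (c 0)"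
  have f: "f > 0" using shift_factor_pos c0_pos c0_lt_1 by (simp add: f_def)
  have lead_u: "lead_mass u = f * lead_mass v"
    using masses_cong(1)[OF u] lead_mass_shifted[OF assms(3)] by (simp add: f_def)
  have tail_u: "tail_mass u \<le> \<theta> * f * tail_mass v"
    using masses_cong(2)[OF u] tail_mass_shifted_le[OF assms(3-5)] by (simp add: f_def)
  have lead_u_pos: "lead_mass u > 0" using lead_u f assms(2) by simp
  define N where "N = (vnorm NN u)\<^sup>2"
  have N: "N = lead_mass u + tail_mass u" by (simp add: N_def vnorm_power2 sqnorm_eq_lead_tail)
  then have N_pos: "N > 0" using lead_u_pos tail_mass_nonneg[of u] by linarith
  have scale: "lead_mass w = lead_mass u / N" "tail_mass w = tail_mass u / N"
    by (simp_all add: w N_def lead_mass_def tail_mass_def block_mass_def trail_mass_def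
        power_divide add_divide_distrib sum_divide_distrib)
  show "sqnorm w = 1" using N N_pos scale by (simp add: sqnorm_eq_lead_tail add_divide_distrib[symmetric])
  show "lead_mass w > 0" using scale N_pos lead_u_pos by simp
  have "tail_mass w / lead_mass w = tail_mass u / lead_mass u" using N_pos by (simp add: scale)
  also have "\<dots> \<le> \<theta> * f * tail_mass v / lead_mass u" using tail_u lead_u_pos by (simp add: divide_right_mono)
  also have "\<dots> = \<theta> * (tail_mass v / lead_mass v)" using lead_u f assms(2) by simp
  finally show "tail_mass w / lead_mass w \<le> \<theta> * (tail_mass v / lead_mass v)" .
qed

lemma aci_step_contracts:
  assumes "sqnorm v = 1" "lead_mass v > 0"
  shows "sqnorm (aci_step NN AA v) = 1 \<and> lead_mass (aci_step NN AA v) > 0 \<and>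
     tail_mass (aci_step NN AA v) / lead_mass (aci_step NN AA v) \<le> \<theta>\<^sup>2 * (tail_mass v / lead_mass v)"
proof -
  define \<alpha> where "\<alpha> = dotp NN v (matvec NN AA v)"
  define wt where "wt = (\<lambda>i. matvec NN AA v i - \<alpha> * v i)"
  define w where "w = (\<lambda>i. wt i / vnorm NN wt)"
  define \<beta> where "\<beta> = dotp NN w (matvec NN AA w)"
  define vt where "vt = (\<lambda>i. matvec NN (transp AA) w i - \<beta> * w i)"
  have step: "aci_step NN AA v = (\<lambda>i. vt i / vnorm NN vt)"
    unfolding aci_step_def Let_def \<alpha>_def wt_def w_def \<beta>_def vt_def ..
  have half1: "sqnorm w = 1" "lead_mass w > 0" "tail_mass w / lead_mass w \<le> \<theta> * (tail_mass v / lead_mass v)"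
    using normalized_shifted_contracts[OF assms, of 1 \<alpha> wt w] rayleigh_bounds[OF assms(1)] matvec_blockA
    by (auto simp: \<alpha>_def wt_def w_def)
  have half2: "sqnorm (aci_step NN AA v) = 1" "lead_mass (aci_step NN AA v) > 0"
      "tail_mass (aci_step NN AA v) / lead_mass (aci_step NN AA v) \<le> \<theta> * (tail_mass w / lead_mass w)"
    using normalized_shifted_contracts[OF half1(1,2), of "-1" \<beta> vt] rayleigh_bounds[OF half1(1)]
      matvec_transp_blockA step
    by (auto simp: \<beta>_def vt_def)
  have "\<theta> * (tail_mass w / lead_mass w) \<le> \<theta> * (\<theta> * (tail_mass v / lead_mass v))"
    by (rule mult_left_mono[OF half1(3)]) (use theta_bounds in simp)
  then show ?thesis using half2 by (simp add: power2_eq_square)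
qed

lemma aci_contracts:
  assumes "sqnorm v0 = 1" "lead_mass v0 > 0"
  shows "sqnorm (aci NN AA v0 k) = 1 \<and> lead_mass (aci NN AA v0 k) > 0 \<and>
     tail_mass (aci NN AA v0 k) / lead_mass (aci NN AA v0 k) \<le> (\<theta>\<^sup>2)^k * (tail_mass v0 / lead_mass v0)"
proof (induction k)
  case 0
  then show ?case using assms by (simp add: aci_def)
next
  case (Suc k)
  define v where "v = aci NN AA v0 k"
  have "aci NN AA v0 (Suc k) = aci_step NN AA v" by (simp add: aci_def v_def)
  moreover have "tail_mass v / lead_mass v \<le> (\<theta>\<^sup>2)^k * (tail_mass v0 / lead_mass v0)"
    using Suc by (simp add: v_def)
  then have "\<theta>\<^sup>2 * (tail_mass v / lead_mass v) \<le> \<theta>\<^sup>2 * ((\<theta>\<^sup>2)^k * (tail_mass v0 / lead_mass v0))"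
    by (rule mult_left_mono) simp
  ultimately show ?case using aci_step_contracts[of v] Suc by (simp add: v_def mult.assoc)
qed

lemma tendsto_masses:
  assumes "\<forall>i<NN. (\<lambda>k. X k i) \<longlonglongrightarrow> L i"
  shows "(\<lambda>k. tail_mass (X k)) \<longlonglongrightarrow> tail_mass L" "(\<lambda>k. lead_mass (X k)) \<longlonglongrightarrow> lead_mass L"
proof -
  have h: "\<And>i. i < NN \<Longrightarrow> (\<lambda>k. X k i) \<longlonglongrightarrow> L i" using assms by auto
  have hb: "\<And>j. j < m \<Longrightarrow> (\<lambda>k. block_mass (X k) j) \<longlonglongrightarrow> block_mass L j"
    unfolding block_mass_def by (intro tendsto_intros h) (auto simp: dimA_def)
  have ht: "(\<lambda>k. trail_mass (X k)) \<longlonglongrightarrow> trail_mass L"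
    unfolding trail_mass_def by (cases trail) (auto intro!: tendsto_intros h simp: dimA_def)
  show "(\<lambda>k. tail_mass (X k)) \<longlonglongrightarrow> tail_mass L"
    unfolding tail_mass_def by (intro tendsto_intros hb ht) auto
  show "(\<lambda>k. lead_mass (X k)) \<longlonglongrightarrow> lead_mass L"
    unfolding lead_mass_def using hb m_pos by auto
qed

lemma aci_limit_masses:
  assumes "sqnorm v0 = 1" "lead_mass v0 > 0" "\<forall>i<NN. (\<lambda>k. aci NN AA v0 k i) \<longlonglongrightarrow> L i"
  shows "tail_mass L = 0" "lead_mass L = 1"
proof -
  define X where "X = aci NN AA v0"
  define R where "R = tail_mass v0 / lead_mass v0"
  have tail_le: "tail_mass (X k) \<le> (\<theta>\<^sup>2)^k * R" for k
  proof -
    have it: "sqnorm (X k) = 1" "lead_mass (X k) > 0" "tail_mass (X k) / lead_mass (X k) \<le> (\<theta>\<^sup>2)^k * R"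
      using aci_contracts[OF assms(1,2), of k] by (auto simp: X_def R_def)
    have "lead_mass (X k) \<le> 1" using it(1) sqnorm_eq_lead_tail[of "X k"] tail_mass_nonneg[of "X k"] by linarith
    then have "tail_mass (X k) \<le> tail_mass (X k) / lead_mass (X k)"
      using tail_mass_nonneg[of "X k"] it(2) by (simp add: le_divide_eq mult_left_le)
    then show ?thesis using it(3) by linarith
  qed
  have geometric_0: "(\<lambda>k. (\<theta>\<^sup>2)^k * R) \<longlonglongrightarrow> 0"
    using theta_bounds by (intro tendsto_mult_left_zero LIMSEQ_power_zero) (simp add: abs_square_less_1)
  have tail_0: "(\<lambda>k. tail_mass (X k)) \<longlonglongrightarrow> 0"
    by (rule real_tendsto_sandwich[where f="\<lambda>_. 0" and h="\<lambda>k. (\<theta>\<^sup>2)^k * R"])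
      (auto simp: tail_mass_nonneg tail_le geometric_0)
  have lim: "(\<lambda>k. tail_mass (X k)) \<longlonglongrightarrow> tail_mass L" "(\<lambda>k. lead_mass (X k)) \<longlonglongrightarrow> lead_mass L"
    using tendsto_masses[of X L] assms(3) by (auto simp: X_def)
  show "tail_mass L = 0" using LIMSEQ_unique[OF lim(1) tail_0] .
  have "lead_mass (X k) = 1 - tail_mass (X k)" for k
    using aci_contracts[OF assms(1,2), of k] sqnorm_eq_lead_tail[of "X k"] by (simp add: X_def)
  then have "(\<lambda>k. lead_mass (X k)) \<longlonglongrightarrow> 1 - 0" by (simp only:) (intro tendsto_diff tendsto_const tail_0)
  then show "lead_mass L = 1" using LIMSEQ_unique[OF lim(2)] by simp
qed

lemma vnorm_blockA_residual:
  assumes "tail_mass L = 0" "lead_mass L = 1"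
  shows "vnorm NN (\<lambda>i. matvec NN AA L i - c 0 * L i) = sqrt (1 - (c 0)\<^sup>2)"
proof -
  have "(\<Sum>j\<in>{1..<m}. block_mass L j) = 0" "trail_mass L = 0"
    using assms(1) unfolding tail_mass_def
    by (simp_all add: add_nonneg_eq_0_iff sum_nonneg block_mass_nonneg trail_mass_nonneg)
  then have "tail_mass (shifted 1 (c 0) L) = 0"
    by (simp add: tail_mass_shifted sum_nonneg_eq_0_iff block_mass_nonneg)
  moreover have "lead_mass (shifted 1 (c 0) L) = 1 - (c 0)\<^sup>2"
    using assms(2) by (simp add: lead_mass_shifted shift_factor_eq)
  moreover have "sqnorm (\<lambda>i. matvec NN AA L i - c 0 * L i) = sqnorm (shifted 1 (c 0) L)"
    by (rule masses_cong) (simp add: matvec_blockA)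
  ultimately show ?thesis by (simp add: vnorm_eq_sqrt_sqnorm sqnorm_eq_lead_tail)
qed

lemma vnorm_shifted_blockA:
  "vnorm NN (matvec NN (\<lambda>i j. AA i j - \<alpha> * idm i j) x) = sqrt (sqnorm (shifted 1 \<alpha> x))"
  unfolding vnorm_eq_sqrt_sqnorm
  by (rule arg_cong[where f=sqrt], rule masses_cong) (simp add: matvec_diff_scaled_idm matvec_blockA)

definition unit0 :: "nat \<Rightarrow> real" where
  "unit0 = (\<lambda>i. if i = 0 then 1 else 0)"

lemma unit0_masses: "lead_mass unit0 = 1" "tail_mass unit0 = 0"
  using m_pos by (simp_all add: lead_mass_def tail_mass_def block_mass_def trail_mass_def unit0_def)

lemma vnorm_unit0: "vnorm NN unit0 = 1"
  by (simp add: vnorm_eq_sqrt_sqnorm sqnorm_eq_lead_tail unit0_masses)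

lemma vnorm_shifted_blockA_unit0:
  "vnorm NN (matvec NN (\<lambda>i j. AA i j - \<alpha> * idm i j) unit0) = sqrt (shift_factor \<alpha> (c 0))"
proof -
  have "\<forall>j\<in>{1..<m}. block_mass unit0 j = 0" "trail_mass unit0 = 0"
    using m_pos by (auto simp: block_mass_def trail_mass_def unit0_def)
  then have "tail_mass (shifted 1 \<alpha> unit0) = 0" by (simp add: tail_mass_shifted)
  then show ?thesis
    by (simp add: vnorm_shifted_blockA sqnorm_eq_lead_tail lead_mass_shifted unit0_masses)
qed

lemma vnorm_shifted_blockA_le:
  assumes "vnorm NN x = 1" "\<And>j. j < m \<Longrightarrow> shift_factor \<alpha> (c j) \<le> K" "shift_factor \<alpha> 1 \<le> K"
  shows "vnorm NN (matvec NN (\<lambda>i j. AA i j - \<alpha> * idm i j) x) \<le> sqrt K"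
proof -
  have "sqnorm x = 1" using assms(1) vnorm_power2[of x] by simp
  then show ?thesis using sqnorm_shifted_le[OF assms(2,3), of x] by (simp add: vnorm_shifted_blockA)
qed

lemma opnorm_shifted_blockA_c0:
  "opnorm NN (\<lambda>i j. AA i j - c 0 * idm i j) = sqrt (1 - (c 0)\<^sup>2)"
proof (rule opnorm_eqI[OF vnorm_unit0])
  show "vnorm NN (matvec NN (\<lambda>i j. AA i j - c 0 * idm i j) unit0) = sqrt (1 - (c 0)\<^sup>2)"
    by (simp add: vnorm_shifted_blockA_unit0 shift_factor_eq)
  have "shift_factor (c 0) x \<le> 1 - (c 0)\<^sup>2" if "c 0 \<le> x" for x
    using shift_factor_antimono[OF less_imp_le[OF c0_pos] that] by (simp add: shift_factor_eq)
  then show "vnorm NN (matvec NN (\<lambda>i j. AA i j - c 0 * idm i j) x) \<le> sqrt (1 - (c 0)\<^sup>2)"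
    if "vnorm NN x = 1" for x
    using c0_le c0_lt_1 by (intro vnorm_shifted_blockA_le[OF that]) auto
qed

lemma opnorm_shifted_blockA_ge:
  "sqrt (1 - (c 0)\<^sup>2) \<le> opnorm NN (\<lambda>i j. AA i j - \<alpha> * idm i j)"
proof -
  have bounded: "vnorm NN (matvec NN (\<lambda>i j. AA i j - \<alpha> * idm i j) x) \<le> 1 + \<bar>\<alpha>\<bar>"
    if "vnorm NN x = 1" for x
    using vnorm_shifted_blockA_le[OF that, of \<alpha> "(1 + \<bar>\<alpha>\<bar>)\<^sup>2"] shift_factor_le abs_c_le_1
    by simp
  have "sqrt (1 - (c 0)\<^sup>2) \<le> sqrt (shift_factor \<alpha> (c 0))"
    by (simp add: shift_factor_eq)
  also have "\<dots> \<le> opnorm NN (\<lambda>i j. AA i j - \<alpha> * idm i j)"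
    using vnorm_matvec_le_opnorm[OF vnorm_unit0 bounded] by (simp add: vnorm_shifted_blockA_unit0)
  finally show ?thesis .
qed

lemma INF_opnorm_shifted_blockA:
  "(INF \<alpha>. opnorm NN (\<lambda>i j. AA i j - \<alpha> * idm i j)) = opnorm NN (\<lambda>i j. AA i j - c 0 * idm i j)"
  by (rule cInf_eq_minimum[OF rangeI]) (auto simp: opnorm_shifted_blockA_c0 opnorm_shifted_blockA_ge)

end

theorem mainTheorem14:
  fixes m :: nat and trail :: bool and c s :: "nat \<Rightarrow> real"
    and v0 vstar :: "nat \<Rightarrow> real"
  defines "n \<equiv> dimA m trail" and "A \<equiv> blockA m trail c s"
  assumes "m \<ge> 1"
    and "\<forall>j<m. (c j)\<^sup>2 + (s j)\<^sup>2 = 1"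
    and "\<forall>j<m. s j \<noteq> 0"
    and "0 < c 0"
    and "\<forall>i j. i < j \<and> j < m \<longrightarrow> c i < c j"
    and "c (m - 1) < 1"
    and "vnorm n v0 = 1"
    and "grade n A v0 \<ge> 2"
    and "v0 0 \<noteq> 0 \<or> v0 1 \<noteq> 0"
    and "\<forall>i<n. (\<lambda>k. aci n A v0 k i) \<longlonglongrightarrow> vstar i"
  shows "(INF \<alpha>. opnorm n (\<lambda>i j. A i j - \<alpha> * idm i j))
           = opnorm n (\<lambda>i j. A i j - c 0 * idm i j)
       \<and> opnorm n (\<lambda>i j. A i j - c 0 * idm i j)
           = vnorm n (\<lambda>i. matvec n A vstar i - c 0 * vstar i)
       \<and> vnorm n (\<lambda>i. matvec n A vstar i - c 0 * vstar i) = sqrt (1 - (c 0)\<^sup>2)"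
proof -
  interpret rotation_blocks m trail c s
    using assms(3,4,6,7,8) by unfold_locales auto
  have "sqnorm v0 = 1"
    using assms(9) vnorm_power2[of v0] by (simp add: n_def)
  moreover have "lead_mass v0 > 0"
    using assms(11) by (auto simp: lead_mass_def block_mass_def add_pos_nonneg add_nonneg_pos)
  moreover note assms(12)[unfolded n_def A_def]
  ultimately have "tail_mass vstar = 0" "lead_mass vstar = 1"
    by (rule aci_limit_masses)+
  then show ?thesis
    unfolding n_def A_def
    using INF_opnorm_shifted_blockA opnorm_shifted_blockA_c0 vnorm_blockA_residual by simp
qed

end
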